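(* Let $H$ and $F$ be $r$-uniform hypergraphs. The following are equivalent: (1) there is a homomorphism from $H$ to $F$; (2) there exists a function $g:i(F)\to i(H)$ such that the sets $A_x=\bigcap_{I\in i(F),\,x\in I} g(I)$, for $x\in V(F)$, cover $V(H)$, i.e. $\bigcup_{x\in V(F)}A_x=V(H)$.
   Context: A hypergraph $H$ has a finite vertex set $V(H)$ and a set $E(H)$ of subsets of $V(H)$; it is $r$-uniform if every edge has exactly $r$ elements. A set of vertices is independent if it contains no edge; $i(H)$ is the family of inclusion-wise maximal independent sets of $H$. A map $f:V(H)\to V(F)$ is a homomorphism if for every edge $h$ of $H$ the image $f(h)$ is an edge of $F$. An intersection over an empty family of subsets of $V(H)$ is taken to be $V(H)$. *)

theory Defs
  imports Main "HOL-Library.FuncSet"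
begin

definition hypergraph :: "'a set \<Rightarrow> 'a set set \<Rightarrow> bool" where
  "hypergraph V E \<longleftrightarrow> finite V \<and> (\<forall>e\<in>E. e \<subseteq> V)"

definition uniform_hypergraph :: "nat \<Rightarrow> 'a set \<Rightarrow> 'a set set \<Rightarrow> bool" where
  "uniform_hypergraph r V E \<longleftrightarrow> hypergraph V E \<and> (\<forall>e\<in>E. card e = r)"

definition independent :: "'a set \<Rightarrow> 'a set set \<Rightarrow> 'a set \<Rightarrow> bool" where
  "independent V E S \<longleftrightarrow> S \<subseteq> V \<and> (\<forall>e\<in>E. \<not> e \<subseteq> S)"

definition max_indep :: "'a set \<Rightarrow> 'a set set \<Rightarrow> 'a set set" where
  "max_indep V E = {S. independent V E S \<and> (\<forall>T. independent V E T \<and> S \<subseteq> T \<longrightarrow> T = S)}"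

definition hyp_hom :: "'a set \<Rightarrow> 'a set set \<Rightarrow> 'b set \<Rightarrow> 'b set set \<Rightarrow> ('a \<Rightarrow> 'b) \<Rightarrow> bool" where
  "hyp_hom VH EH VF EF f \<longleftrightarrow> f \<in> VH \<rightarrow> VF \<and> (\<forall>h\<in>EH. f ` h \<in> EF)"

text \<open>A_x: intersection of g(I) over I in i(F) containing x; the empty intersection is V(H).\<close>
definition A_set :: "'a set \<Rightarrow> 'b set set \<Rightarrow> ('b set \<Rightarrow> 'a set) \<Rightarrow> 'b \<Rightarrow> 'a set" where
  "A_set VH iF g x = VH \<inter> \<Inter> {g I | I. I \<in> iF \<and> x \<in> I}"

end

theory Submission
  imports Defs
begin

text \<open>
  Given a homomorphism f, send I \<in> i(F) to a maximal independent set of H containing f\<inverse>(I);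
  then every v lies in A_{f v}. Conversely, choose f v with v \<in> A_{f v}. If an edge h had an
  image f(h) that is not an edge, then by uniformity f(h) has at most r vertices and so contains
  no edge; extending it to some I \<in> i(F) gives h \<subseteq> g(I), contradicting independence of g(I).
\<close>

lemma independent_extends_to_max_indep:
  assumes "finite V" and "independent V E S"
  shows "\<exists>M\<in>max_indep V E. S \<subseteq> M"
proof -
  let ?C = "{T. independent V E T \<and> S \<subseteq> T}"
  have "finite ?C"
    by (rule finite_subset[of _ "Pow V"]) (auto simp: independent_def assms(1))
  moreover have "?C \<noteq> {}"
    using assms(2) by auto
  ultimately obtain M where "M \<in> ?C" and "\<forall>T\<in>?C. M \<le> T \<longrightarrow> M = T"
    using finite_has_maximal by metis
  then have "M \<in> max_indep V E"
    unfolding max_indep_def by auto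
  with \<open>M \<in> ?C\<close> show ?thesis
    by blast
qed

lemma max_indep_no_edge_subset:
  assumes "M \<in> max_indep V E" and "e \<in> E"
  shows "\<not> e \<subseteq> M"
  using assms by (auto simp: max_indep_def independent_def)

lemma hyp_hom_vimage_independent:
  assumes "hyp_hom VH EH VF EF f" and "independent VF EF I"
  shows "independent VH EH (VH \<inter> f -` I)"
  unfolding independent_def
proof (intro conjI ballI notI)
  fix h assume "h \<in> EH" and "h \<subseteq> VH \<inter> f -` I"
  then have "f ` h \<in> EF" and "f ` h \<subseteq> I"
    using assms(1) by (auto simp: hyp_hom_def)
  then show False
    using assms(2) by (auto simp: independent_def)
qed simp

lemma uniform_small_nonedge_independent:
  assumes "uniform_hypergraph r V E" and "S \<subseteq> V" and "finite S"
    and "card S \<le> r" and "S \<notin> E"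
  shows "independent V E S"
  unfolding independent_def
proof (intro conjI ballI notI \<open>S \<subseteq> V\<close>)
  fix e assume "e \<in> E" and "e \<subseteq> S"
  moreover have "card S \<le> card e"
    using \<open>e \<in> E\<close> assms(1,4) by (simp add: uniform_hypergraph_def)
  ultimately have "e = S"
    using card_seteq[OF \<open>finite S\<close>] by blast
  with \<open>e \<in> E\<close> \<open>S \<notin> E\<close> show False by simp
qed

lemma A_set_subset:
  assumes "I \<in> iF" and "x \<in> I"
  shows "A_set VH iF g x \<subseteq> g I"
  using assms unfolding A_set_def by blast

lemma hyp_hom_imp_max_indep_cover:
  assumes "hypergraph VH EH" and hom: "hyp_hom VH EH VF EF f"
  shows "\<exists>g. g \<in> max_indep VF EF \<rightarrow> max_indep VH EH \<and>
             (\<Union>x\<in>VF. A_set VH (max_indep VF EF) g x) = VH"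
proof -
  have "\<exists>M\<in>max_indep VH EH. VH \<inter> f -` I \<subseteq> M" if "I \<in> max_indep VF EF" for I
  proof (rule independent_extends_to_max_indep)
    show "finite VH"
      using assms(1) by (simp add: hypergraph_def)
    show "independent VH EH (VH \<inter> f -` I)"
      using hom that by (simp add: hyp_hom_vimage_independent max_indep_def)
  qed
  then obtain g where g: "g I \<in> max_indep VH EH" "VH \<inter> f -` I \<subseteq> g I"
    if "I \<in> max_indep VF EF" for I
    by metis
  have "VH \<subseteq> (\<Union>x\<in>VF. A_set VH (max_indep VF EF) g x)"
  proof
    fix v assume "v \<in> VH"
    then have "v \<in> A_set VH (max_indep VF EF) g (f v)"
      using g(2) unfolding A_set_def by blast
    moreover have "f v \<in> VF"
      using hom \<open>v \<in> VH\<close> by (auto simp: hyp_hom_def)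
    ultimately show "v \<in> (\<Union>x\<in>VF. A_set VH (max_indep VF EF) g x)"
      by blast
  qed
  moreover have "(\<Union>x\<in>VF. A_set VH (max_indep VF EF) g x) \<subseteq> VH"
    by (auto simp: A_set_def)
  ultimately show ?thesis
    using g(1) by blast
qed

lemma max_indep_cover_imp_hyp_hom:
  assumes H: "uniform_hypergraph r VH EH" and F: "uniform_hypergraph r VF EF"
    and g: "g \<in> max_indep VF EF \<rightarrow> max_indep VH EH"
    and cover: "(\<Union>x\<in>VF. A_set VH (max_indep VF EF) g x) = VH"
  shows "\<exists>f. hyp_hom VH EH VF EF f"
proof -
  have "\<forall>v\<in>VH. \<exists>x. x \<in> VF \<and> v \<in> A_set VH (max_indep VF EF) g x"
    using cover by blast
  then obtain f where f: "f v \<in> VF" "v \<in> A_set VH (max_indep VF EF) g (f v)" if "v \<in> VH" for v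
    by (auto dest!: bchoice)
  have "f ` h \<in> EF" if "h \<in> EH" for h
  proof (rule ccontr)
    assume "f ` h \<notin> EF"
    have "h \<subseteq> VH" and "finite VH" and "card h = r"
      using H \<open>h \<in> EH\<close> by (auto simp: uniform_hypergraph_def hypergraph_def)
    have "finite h"
      using \<open>h \<subseteq> VH\<close> \<open>finite VH\<close> by (rule finite_subset)
    have "independent VF EF (f ` h)"
    proof (rule uniform_small_nonedge_independent[OF F])
      show "f ` h \<subseteq> VF"
        using f(1) \<open>h \<subseteq> VH\<close> by blast
      show "finite (f ` h)"
        using \<open>finite h\<close> by simp
      show "card (f ` h) \<le> r"
        using card_image_le[OF \<open>finite h\<close>] \<open>card h = r\<close> by simp
    qed fact
    moreover have "finite VF"
      using F by (simp add: uniform_hypergraph_def hypergraph_def)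
    ultimately obtain I where I: "I \<in> max_indep VF EF" "f ` h \<subseteq> I"
      using independent_extends_to_max_indep by blast
    have "h \<subseteq> g I"
    proof
      fix v assume "v \<in> h"
      then have "v \<in> VH" and "f v \<in> I"
        using \<open>h \<subseteq> VH\<close> I(2) by auto
      show "v \<in> g I"
        using A_set_subset[OF I(1) \<open>f v \<in> I\<close>, of VH g] f(2)[OF \<open>v \<in> VH\<close>]
        by (rule subsetD)
    qed
    moreover have "g I \<in> max_indep VH EH"
      using g I(1) by (rule funcset_mem)
    ultimately show False
      using max_indep_no_edge_subset \<open>h \<in> EH\<close> by blast
  qed
  then have "hyp_hom VH EH VF EF f"
    using f(1) by (simp add: hyp_hom_def)
  then show ?thesis by blast
qed

theorem mainTheorem12:
  fixes VH :: "'a set" and EH :: "'a set set" and VF :: "'b set" and EF :: "'b set set"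
  assumes "uniform_hypergraph r VH EH" and "uniform_hypergraph r VF EF"
  shows "(\<exists>f. hyp_hom VH EH VF EF f) \<longleftrightarrow>
         (\<exists>g. g \<in> max_indep VF EF \<rightarrow> max_indep VH EH \<and>
              (\<Union>x\<in>VF. A_set VH (max_indep VF EF) g x) = VH)"
proof
  assume "\<exists>f. hyp_hom VH EH VF EF f"
  moreover have "hypergraph VH EH"
    using assms(1) by (simp add: uniform_hypergraph_def)
  ultimately show "\<exists>g. g \<in> max_indep VF EF \<rightarrow> max_indep VH EH \<and>
                      (\<Union>x\<in>VF. A_set VH (max_indep VF EF) g x) = VH"
    using hyp_hom_imp_max_indep_cover by blast
next
  assume "\<exists>g. g \<in> max_indep VF EF \<rightarrow> max_indep VH EH \<and>
               (\<Union>x\<in>VF. A_set VH (max_indep VF EF) g x) = VH"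
  then show "\<exists>f. hyp_hom VH EH VF EF f"
    using max_indep_cover_imp_hyp_hom[OF assms] by blast
qed

end
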